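(* Let $u$ be a finite game with player set $\mathcal V$ and strategy profile space $\mathcal X$, let $\mathcal R\subseteq\mathcal V$ be nonempty and $\mathcal S=\mathcal V\setminus\mathcal R$. Let $y^*\in\mathcal X_{\mathcal R}$ be a Nash equilibrium of the averaged game $\bar u\in\mathcal U_{\mathcal R}$. If $$\chi^{\bar u}_i(y^* )\ge 2\|u_i-\bar u_i\|_\infty\qquad\text{for all } i\in\mathcal R,$$ then $y^*$ is a Nash equilibrium of the game $u^{(z)}\in\mathcal U_{\mathcal R}$ for every $z\in\mathcal X_{\mathcal S}$.
   Context: A finite game consists of a finite nonempty player set $\mathcal V$, finite nonempty action sets $\mathcal A_i$, profile space $\mathcal X=\prod_{i\in\mathcal V}\mathcal A_i$, and utilities $u_i:\mathcal X\to\mathbb R$. Profiles $x,y$ are $i$-comparable, $x\sim_i y$, if they coincide except possibly in entry $i$; for a game $v$ define $\chi^v_i(x)=\min_{y\sim_i x,\,y\neq x}\{v_i(x)-v_i(y)\}$, and a (pure strategy) Nash equilibrium of $v$ is a profile $x^*$ with $\chi^v_i(x^* )\ge0$ for every player $i$. For $\mathcal R\subseteq\mathcal V$ nonempty and $\mathcal S=\mathcal V\setminus\mathcal R$, write $\mathcal X_{\mathcal R}=\prod_{i\in\mathcal R}\mathcal A_i$, $\mathcal X_{\mathcal S}=\prod_{i\in\mathcal S}\mathcal A_i$, identify $\mathcal X$ with $\mathcal X_{\mathcal R}\times\mathcal X_{\mathcal S}$, writing $x=(x_{\mathcal R},x_{\mathcal S})$, and let $\mathcal U_{\mathcal R}$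 be the set of games with player set $\mathcal R$ and profile space $\mathcal X_{\mathcal R}$. For $z\in\mathcal X_{\mathcal S}$ the game $u^{(z)}\in\mathcal U_{\mathcal R}$ has utilities $u^{(z)}_i(y)=u_i(y,z)$ for $i\in\mathcal R$, $y\in\mathcal X_{\mathcal R}$. The averaged game $\bar u\in\mathcal U_{\mathcal R}$ has utilities $\bar u_i(y)=\frac1{|\mathcal X_{\mathcal S}|}\sum_{z\in\mathcal X_{\mathcal S}}u_i(y,z)$ for $i\in\mathcal R$. For $i\in\mathcal R$, $\|u_i-\bar u_i\|_\infty=\max_{x\in\mathcal X}|u_i(x)-\bar u_i(x_{\mathcal R})|$. *)

theory Defs
  imports "HOL-Analysis.Analysis" "HOL-Library.Extended_Real"
begin

(* A finite game: player set P, action sets A i, profiles = PiE P A (extensional functions),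
   utilities v :: player => profile => real. *)

definition profiles :: "'p set \<Rightarrow> ('p \<Rightarrow> 'a set) \<Rightarrow> ('p \<Rightarrow> 'a) set" where
  "profiles P A = PiE P A"

definition comparable :: "'p \<Rightarrow> ('p \<Rightarrow> 'a) \<Rightarrow> ('p \<Rightarrow> 'a) \<Rightarrow> bool" where
  "comparable i x y \<longleftrightarrow> (\<forall>j. j \<noteq> i \<longrightarrow> x j = y j)"

(* chi^v_i(x) = min over y ~_i x, y \<noteq> x of v_i(x) - v_i(y); min over the empty set is +infinity *)
definition chi :: "'p set \<Rightarrow> ('p \<Rightarrow> 'a set) \<Rightarrow> ('p \<Rightarrow> ('p \<Rightarrow> 'a) \<Rightarrow> real)
                   \<Rightarrow> 'p \<Rightarrow> ('p \<Rightarrow> 'a) \<Rightarrow> ereal" where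
  "chi P A v i x = (INF y \<in> {y \<in> profiles P A. comparable i y x \<and> y \<noteq> x}. ereal (v i x - v i y))"

definition nash :: "'p set \<Rightarrow> ('p \<Rightarrow> 'a set) \<Rightarrow> ('p \<Rightarrow> ('p \<Rightarrow> 'a) \<Rightarrow> real)
                    \<Rightarrow> ('p \<Rightarrow> 'a) \<Rightarrow> bool" where
  "nash P A v x \<longleftrightarrow> x \<in> profiles P A \<and> (\<forall>i\<in>P. chi P A v i x \<ge> 0)"

(* identification X = X_R x X_S: (y,z) \<mapsto> merged profile *)
definition merge :: "'p set \<Rightarrow> ('p \<Rightarrow> 'a) \<Rightarrow> ('p \<Rightarrow> 'a) \<Rightarrow> ('p \<Rightarrow> 'a)" where
  "merge R y z = (\<lambda>j. if j \<in> R then y j else z j)"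

definition fixgame :: "'p set \<Rightarrow> ('p \<Rightarrow> ('p \<Rightarrow> 'a) \<Rightarrow> real) \<Rightarrow> ('p \<Rightarrow> 'a)
                       \<Rightarrow> 'p \<Rightarrow> ('p \<Rightarrow> 'a) \<Rightarrow> real" where
  "fixgame R u z = (\<lambda>i y. u i (merge R y z))"

definition avg_game :: "'p set \<Rightarrow> 'p set \<Rightarrow> ('p \<Rightarrow> 'a set) \<Rightarrow> ('p \<Rightarrow> ('p \<Rightarrow> 'a) \<Rightarrow> real)
                        \<Rightarrow> 'p \<Rightarrow> ('p \<Rightarrow> 'a) \<Rightarrow> real" where
  "avg_game V R A u = (\<lambda>i y. (\<Sum>z\<in>profiles (V - R) A. u i (merge R y z))
                                / real (card (profiles (V - R) A)))"

definition dev_norm :: "'p set \<Rightarrow> 'p set \<Rightarrow> ('p \<Rightarrow> 'a set) \<Rightarrow> ('p \<Rightarrow> ('p \<Rightarrow> 'a) \<Rightarrow> real)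
                        \<Rightarrow> 'p \<Rightarrow> real" where
  "dev_norm V R A u i = Max ((\<lambda>x. \<bar>u i x - avg_game V R A u i (restrict x R)\<bar>) ` profiles V A)"

end

theory Submission
  imports Defs
begin

text \<open>Fixing the non-deviating players at \<open>z\<close> moves each utility \<open>u\<^sub>i\<close> by at most
  \<open>\<parallel>u\<^sub>i - \<bar>u\<^sub>i\<parallel>\<^sub>\<infinity>\<close> away from the averaged game, so every unilateral payoff gain changes by at
  most twice that amount. A Nash equilibrium whose stability margin \<open>\<chi>\<close> exceeds this bound
  therefore survives the perturbation.\<close>

lemma ereal_le_chi_iff:
  "ereal c \<le> chi P A v i x \<longleftrightarrow>
     (\<forall>y\<in>profiles P A. comparable i y x \<and> y \<noteq> x \<longrightarrow> c \<le> v i x - v i y)"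
  unfolding chi_def by (auto simp: le_INF_iff)

lemma nash_of_close_game:
  assumes x: "x \<in> profiles P A"
    and close: "\<And>i y. i \<in> P \<Longrightarrow> y \<in> profiles P A \<Longrightarrow> \<bar>v i y - w i y\<bar> \<le> e i"
    and margin: "\<And>i. i \<in> P \<Longrightarrow> ereal (2 * e i) \<le> chi P A v i x"
  shows "nash P A w x"
  unfolding nash_def
proof (intro conjI x ballI)
  fix i assume i: "i \<in> P"
  have "ereal 0 \<le> chi P A w i x"
    unfolding ereal_le_chi_iff
  proof (intro ballI impI, elim conjE)
    fix y assume y: "y \<in> profiles P A" "comparable i y x" "y \<noteq> x"
    have "2 * e i \<le> v i x - v i y"
      using margin[OF i] y by (simp add: ereal_le_chi_iff)
    then show "0 \<le> w i x - w i y"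
      using close[OF i x] close[OF i y(1)] by linarith
  qed
  then show "0 \<le> chi P A w i x"
    by (simp add: zero_ereal_def)
qed

lemma merge_in_profiles:
  assumes "y \<in> profiles R A" "z \<in> profiles (V - R) A" "R \<subseteq> V"
  shows "merge R y z \<in> profiles V A"
  using assms unfolding profiles_def merge_def PiE_def Pi_def extensional_def by auto

lemma restrict_merge:
  assumes "y \<in> profiles R A"
  shows "restrict (merge R y z) R = y"
  using assms unfolding profiles_def merge_def PiE_def extensional_def by (auto intro!: ext)

lemma fixgame_avg_game_dist_le_dev_norm:
  assumes "finite V" "\<forall>i\<in>V. finite (A i)" "R \<subseteq> V"
    and y: "y \<in> profiles R A" and z: "z \<in> profiles (V - R) A"
  shows "\<bar>fixgame R u z i y - avg_game V R A u i y\<bar> \<le> dev_norm V R A u i"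
proof -
  have "finite (profiles V A)"
    unfolding profiles_def using assms(1,2) by (intro finite_PiE) auto
  moreover have "merge R y z \<in> profiles V A"
    using merge_in_profiles[OF y z \<open>R \<subseteq> V\<close>] .
  ultimately show ?thesis
    unfolding dev_norm_def fixgame_def using restrict_merge[OF y, of z]
    by (metis (no_types, lifting) Max_ge finite_imageI image_eqI)
qed

theorem proposition2:
  fixes V R :: "'p set" and A :: "'p \<Rightarrow> 'a set"
    and u :: "'p \<Rightarrow> ('p \<Rightarrow> 'a) \<Rightarrow> real" and ystar :: "'p \<Rightarrow> 'a"
  assumes "finite V" and "V \<noteq> {}"
    and "\<forall>i\<in>V. finite (A i) \<and> A i \<noteq> {}"
    and "R \<subseteq> V" and "R \<noteq> {}"
    and "nash R A (avg_game V R A u) ystar"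
    and "\<forall>i\<in>R. chi R A (avg_game V R A u) i ystar \<ge> ereal (2 * dev_norm V R A u i)"
  shows "\<forall>z\<in>profiles (V - R) A. nash R A (fixgame R u z) ystar"
proof
  fix z assume z: "z \<in> profiles (V - R) A"
  show "nash R A (fixgame R u z) ystar"
  proof (rule nash_of_close_game)
    show "ystar \<in> profiles R A"
      using assms(6) by (simp add: nash_def)
    show "\<bar>avg_game V R A u i y - fixgame R u z i y\<bar> \<le> dev_norm V R A u i"
      if "y \<in> profiles R A" for i y
      using fixgame_avg_game_dist_le_dev_norm[OF assms(1) _ assms(4) that z] assms(3)
      by (simp add: abs_minus_commute)
  qed (use assms(7) in blast)
qed

end
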